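(* Let $q$ be a prime power and $T\in\mathbb F_q[X,Y,Z]$ a reduced polynomial. Suppose either (1) $T$ satisfies Property (a): $T(a,0,z)=T(0,b,z)=z$ for all $a,b,z\in\mathbb F_q$, together with at least one of Property (c): for all $a,b,c,d\in\mathbb F_q$ with $a\neq c$ there is a unique $x$ with $T(x,a,b)=T(x,c,d)$; or Property (e): for all $a,b,c,d\in\mathbb F_q$ with $a\neq c$ there is a unique pair $(y,z)$ with $T(a,y,z)=b$ and $T(c,y,z)=d$; or (2) $T$ satisfies Property (d): for all $a,b,c\in\mathbb F_q$ there is a unique $z$ with $T(a,b,z)=c$. Then $T(X,Y,Z)$ is a permutation polynomial over $\mathbb F_q$, i.e. for every $d\in\mathbb F_q$ the equation $T(x,y,z)=d$ has exactly $q^2$ solutions $(x,y,z)\in\mathbb F_q^3$.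
   Context: A polynomial is reduced if its degree in each variable is less than $q$. *)

theory Defs
  imports "HOL-Library.Cardinality"
begin

text \<open>The finite field F_q is modelled as a type 'a of class finite and field;
q = CARD('a) (automatically a prime power). A reduced polynomial in
F_q[X,Y,Z] is given by its coefficient array c i j k with 0 \<le> i,j,k < q
(coefficients at other indices are irrelevant/ignored); it is evaluated as below.\<close>

definition red_eval :: "(nat \<Rightarrow> nat \<Rightarrow> nat \<Rightarrow> 'a::{finite,field}) \<Rightarrow> 'a \<Rightarrow> 'a \<Rightarrow> 'a \<Rightarrow> 'a" where
  "red_eval c (x::'a) y z =
     (\<Sum>i<CARD('a). \<Sum>j<CARD('a). \<Sum>k<CARD('a). c i j k * x ^ i * y ^ j * z ^ k)"

definition propA :: "('a::zero \<Rightarrow> 'a \<Rightarrow> 'a \<Rightarrow> 'a) \<Rightarrow> bool" where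
  "propA T \<longleftrightarrow> (\<forall>a b z. T a 0 z = z \<and> T 0 b z = z)"

definition propC :: "('a \<Rightarrow> 'a \<Rightarrow> 'a \<Rightarrow> 'a) \<Rightarrow> bool" where
  "propC T \<longleftrightarrow> (\<forall>a b c d. a \<noteq> c \<longrightarrow> (\<exists>!x. T x a b = T x c d))"

definition propD :: "('a \<Rightarrow> 'a \<Rightarrow> 'a \<Rightarrow> 'a) \<Rightarrow> bool" where
  "propD T \<longleftrightarrow> (\<forall>a b c. \<exists>!z. T a b z = c)"

definition propE :: "('a \<Rightarrow> 'a \<Rightarrow> 'a \<Rightarrow> 'a) \<Rightarrow> bool" where
  "propE T \<longleftrightarrow> (\<forall>a b c d. a \<noteq> c \<longrightarrow>
      (\<exists>!p. T a (fst p) (snd p) = b \<and> T c (fst p) (snd p) = d))"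

definition is_perm_poly3 :: "('a::finite \<Rightarrow> 'a \<Rightarrow> 'a \<Rightarrow> 'a) \<Rightarrow> bool" where
  "is_perm_poly3 (T::'a \<Rightarrow> 'a \<Rightarrow> 'a \<Rightarrow> 'a) \<longleftrightarrow>
     (\<forall>d. card {(x, y, z). T x y z = d} = CARD('a) ^ 2)"

end

theory Submission
  imports Defs
begin

text \<open>Only the combinatorics of the evaluation map matters, not that it is a polynomial.
Under (d) the projection (x, y, z) \<mapsto> (x, y) is a bijection from a level set onto
F_q \<times> F_q. Under (a) and (c), a level set T = e consists of the q points (x, 0, e)
together with, for each of the (q - 1) q pairs (y, z) with y \<noteq> 0, exactly one point
(x, y, z), because (c) applied to (0, e) and (y, z) together with T x 0 e = e says that
T x y z = e has a unique solution x. Property (e) gives the same picture with the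
roles of x and y exchanged.\<close>

lemma card_eq_if_unique_preimage:
  assumes "f ` S \<subseteq> B" and "\<And>p. p \<in> B \<Longrightarrow> \<exists>!s. s \<in> S \<and> f s = p"
  shows "card S = card B"
proof (rule bij_betw_same_card)
  have "inj_on f S"
    by (rule inj_onI) (use assms in blast)
  moreover have "B \<subseteq> f ` S"
    using assms(2) by blast
  ultimately show "bij_betw f S B"
    using assms(1) by (simp add: bij_betw_def)
qed

lemma card_level_set_swap:
  fixes T :: "'a \<Rightarrow> 'a \<Rightarrow> 'b \<Rightarrow> 'c"
  shows "card {(x, y, z). T x y z = e} = card {(x, y, z). T y x z = e}"
proof -
  have "{(x, y, z). T x y z = e} = (\<lambda>(x, y, z). (y, x, z)) ` {(x, y, z). T y x z = e}"
    by (auto simp: image_iff)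
  moreover have "inj (\<lambda>(x::'a, y::'a, z::'b). (y, x, z))"
    by (auto simp: inj_def)
  ultimately show ?thesis
    by (simp add: card_image inj_on_subset)
qed

lemma card_level_set_if_unique_last:
  fixes T :: "'a::finite \<Rightarrow> 'a \<Rightarrow> 'a \<Rightarrow> 'a"
  assumes "\<And>x y. \<exists>!z. T x y z = e"
  shows "card {(x, y, z). T x y z = e} = CARD('a) ^ 2"
proof -
  have "card {(x, y, z). T x y z = e} = card (UNIV :: ('a \<times> 'a) set)"
    by (rule card_eq_if_unique_preimage[where f = "\<lambda>(x, y, z). (x, y)"])
       (use assms in \<open>fastforce+\<close>)
  then show ?thesis
    by (simp add: power2_eq_square flip: UNIV_Times_UNIV)
qed

lemma card_level_set_if_unique_first_off_axis:
  fixes T :: "'a::{finite,zero} \<Rightarrow> 'a \<Rightarrow> 'a \<Rightarrow> 'a"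
  assumes axis: "\<And>x z. T x 0 z = z"
    and unique: "\<And>y z. y \<noteq> 0 \<Longrightarrow> \<exists>!x. T x y z = e"
  shows "card {(x, y, z). T x y z = e} = CARD('a) ^ 2"
proof -
  let ?on_axis = "{(x, y, z). y = 0 \<and> z = e} :: ('a \<times> 'a \<times> 'a) set"
  let ?off_axis = "{(x, y, z). y \<noteq> 0 \<and> T x y z = e}"
  have split: "{(x, y, z). T x y z = e} = ?on_axis \<union> ?off_axis"
    using axis by auto
  have "?on_axis = range (\<lambda>x. (x, 0, e))"
    by auto
  then have card_on: "card ?on_axis = CARD('a)"
    by (simp add: card_image inj_def)
  have "card ?off_axis = card ((UNIV - {0 :: 'a}) \<times> (UNIV :: 'a set))"
    by (rule card_eq_if_unique_preimage[where f = "\<lambda>(x, y, z). (y, z)"])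
       (use unique in \<open>fastforce+\<close>)
  then have card_off: "card ?off_axis = (CARD('a) - 1) * CARD('a)"
    by (simp add: card_cartesian_product)
  have "card {(x, y, z). T x y z = e} = CARD('a) + (CARD('a) - 1) * CARD('a)"
    unfolding split by (subst card_Un_disjoint) (auto simp: card_on card_off)
  also have "\<dots> = CARD('a) ^ 2"
    using finite_UNIV_card_ge_0[where 'a = 'a]
    by (cases "CARD('a)") (auto simp: power2_eq_square)
  finally show ?thesis .
qed

lemma propA_propC_unique_first:
  assumes "propA T" "propC T" "y \<noteq> 0"
  shows "\<exists>!x. T x y z = e"
proof -
  have "\<exists>!x. T x 0 e = T x y z"
    using assms(2,3) unfolding propC_def by metis
  moreover have "T x 0 e = e" for x
    using assms(1) by (simp add: propA_def)
  ultimately show ?thesis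
    by metis
qed

lemma propA_propE_unique_second:
  assumes A: "propA T" and E: "propE T" and "x \<noteq> 0"
  shows "\<exists>!y. T x y z = e"
proof -
  have axis: "T 0 y z = z" for y z
    using A by (simp add: propA_def)
  have "\<exists>!p. T x (fst p) (snd p) = e \<and> T 0 (fst p) (snd p) = z"
    using E \<open>x \<noteq> 0\<close> unfolding propE_def by metis
  then have "\<exists>!p. T x (fst p) (snd p) = e \<and> snd p = z"
    by (simp add: axis)
  then show ?thesis
    by (metis fst_conv snd_conv)
qed

theorem corollary4p5:
  fixes c :: "nat \<Rightarrow> nat \<Rightarrow> nat \<Rightarrow> 'a::{finite,field}"
  assumes "(propA (red_eval c) \<and> (propC (red_eval c) \<or> propE (red_eval c)))
           \<or> propD (red_eval c)"
  shows "is_perm_poly3 (red_eval c)"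
  unfolding is_perm_poly3_def
proof
  fix e
  let ?T = "red_eval c"
  consider "propA ?T" "propC ?T" | "propA ?T" "propE ?T" | "propD ?T"
    using assms by blast
  then show "card {(x, y, z). ?T x y z = e} = CARD('a) ^ 2"
  proof cases
    case 1
    then show ?thesis
      by (intro card_level_set_if_unique_first_off_axis propA_propC_unique_first)
         (auto simp: propA_def)
  next
    case 2
    then have "card {(x, y, z). ?T y x z = e} = CARD('a) ^ 2"
      by (intro card_level_set_if_unique_first_off_axis propA_propE_unique_second)
         (auto simp: propA_def)
    then show ?thesis
      by (simp add: card_level_set_swap[of ?T])
  next
    case 3
    then show ?thesis
      by (intro card_level_set_if_unique_last) (simp add: propD_def)
  qed
qed

end
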